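(* With the notation below, the exact sequence of $G$-spaces $$0\to\ell_2(T)\to\ell_2(T)\oplus\ell_2(T)\to\ell_2(T)\to0,$$ where $G=\mathrm{Aut}(T)$ acts on both end spaces by $u$ and on the middle space by $\lambda(g)=\begin{pmatrix}u(g)&u(g)L-Lu(g)\\0&u(g)\end{pmatrix}$, does not $G$-split (there is no bounded linear $G$-equivariant right inverse of the quotient map, equivalently no bounded $G$-equivariant projection onto the first summand), although it splits as an exact sequence of Banach spaces.
   Context: $F_\infty$ is the free group on generators $a_1,a_2,\dots$; $T$ is its Cayley graph (a tree, vertices the reduced words, rooted at the empty word $\emptyset$); for $t\ne\emptyset$, $\hat t$ is $t$ with its last letter deleted. $G=\mathrm{Aut}(T)$ is the group of graph automorphisms of $T$, acting by $u(g)x=(x(g^{-1}t))_{t\in T}$ on $\mathbb C^T$, $\ell_1(T)$, $\ell_2(T)$. $L:\ell_1(T)\to\ell_1(T)$ is given by $Le_t=e_{\hat t}$ ($t\ne\emptyset$), $Le_\emptyset=0$. It is known (Pytlik–Szwarc) that $u(g)L-Lu(g)$ extends to a bounded operator on $\ell_2(T)$ of norm at most $2$, so $\lambda$ is a bounded representation on $\ell_2(T)\oplus\ell_2(T)$. *)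

theory Defs
  imports "HOL-Analysis.Analysis"
begin

text \<open>A letter is a generator index together with a sign: (i, True) is a_i,
  (i, False) is a_i inverse.  Generators are indexed by nat (a countably
  infinite family, as a_1, a_2, ...).\<close>
type_synonym letter = "nat \<times> bool"

definition inv_letter :: "letter \<Rightarrow> letter" where
  "inv_letter l = (fst l, \<not> snd l)"

definition reduced :: "letter list \<Rightarrow> bool" where
  "reduced w \<longleftrightarrow> (\<forall>i. Suc i < length w \<longrightarrow> w ! Suc i \<noteq> inv_letter (w ! i))"

typedef vertex = "{w :: letter list. reduced w}"
  morphisms word Abs_vertex
  by (rule exI[of _ "[]"]) (simp add: reduced_def)

definition root :: vertex where
  "root = Abs_vertex []"

definition parent :: "vertex \<Rightarrow> vertex" where
  "parent t = Abs_vertex (butlast (word t))"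

text \<open>Edges of the Cayley graph (right multiplication by generators):
  t is adjacent to t-hat.\<close>
definition adj :: "vertex \<Rightarrow> vertex \<Rightarrow> bool" where
  "adj s t \<longleftrightarrow> (t \<noteq> root \<and> s = parent t) \<or> (s \<noteq> root \<and> t = parent s)"

definition Aut :: "(vertex \<Rightarrow> vertex) set" where
  "Aut = {g. bij g \<and> (\<forall>s t. adj s t \<longleftrightarrow> adj (g s) (g t))}"

definition u :: "(vertex \<Rightarrow> vertex) \<Rightarrow> (vertex \<Rightarrow> complex) \<Rightarrow> (vertex \<Rightarrow> complex)" where
  "u g x = (\<lambda>t. x (inv g t))"

definition ell1 :: "(vertex \<Rightarrow> complex) set" where
  "ell1 = {x. (\<lambda>t. cmod (x t)) summable_on UNIV}"

definition ell2 :: "(vertex \<Rightarrow> complex) set" where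
  "ell2 = {x. (\<lambda>t. (cmod (x t))\<^sup>2) summable_on UNIV}"

definition l2norm :: "(vertex \<Rightarrow> complex) \<Rightarrow> real" where
  "l2norm x = sqrt (\<Sum>\<^sub>\<infinity>t. (cmod (x t))\<^sup>2)"

text \<open>L e_t = e_{t-hat} (t not the root), L e_root = 0, extended to ell_1:
  (L x)(s) = sum of x(t) over all t \<noteq> root with t-hat = s.\<close>
definition L :: "(vertex \<Rightarrow> complex) \<Rightarrow> (vertex \<Rightarrow> complex)" where
  "L x = (\<lambda>s. \<Sum>\<^sub>\<infinity>t\<in>{t. t \<noteq> root \<and> parent t = s}. x t)"

text \<open>Bounded linear operators on ell_2 (functions defined on all of
  vertex => complex, only their behaviour on ell_2 matters).\<close>
definition bounded_op_l2 :: "((vertex \<Rightarrow> complex) \<Rightarrow> (vertex \<Rightarrow> complex)) \<Rightarrow> bool" where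
  "bounded_op_l2 A \<longleftrightarrow>
     (\<forall>x\<in>ell2. A x \<in> ell2) \<and>
     (\<forall>x\<in>ell2. \<forall>y\<in>ell2. A (\<lambda>t. x t + y t) = (\<lambda>t. A x t + A y t)) \<and>
     (\<forall>x\<in>ell2. \<forall>c::complex. A (\<lambda>t. c * x t) = (\<lambda>t. c * A x t)) \<and>
     (\<exists>K. \<forall>x\<in>ell2. l2norm (A x) \<le> K * l2norm x)"

text \<open>D g: the bounded extension to ell_2 of u(g)L - L u(g) (defined on ell_1),
  normalised to be 0 outside ell_2 so that it is unique (ell_1 is dense in ell_2).\<close>
definition D :: "(vertex \<Rightarrow> vertex) \<Rightarrow> (vertex \<Rightarrow> complex) \<Rightarrow> (vertex \<Rightarrow> complex)" where
  "D g = (THE A. bounded_op_l2 A \<and> (\<forall>x. x \<notin> ell2 \<longrightarrow> A x = (\<lambda>t. 0)) \<and>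
                 (\<forall>x\<in>ell1. A x = (\<lambda>s. u g (L x) s - L (u g x) s)))"

type_synonym pair = "(vertex \<Rightarrow> complex) \<times> (vertex \<Rightarrow> complex)"

definition l2pair :: "pair set" where
  "l2pair = ell2 \<times> ell2"

definition pairnorm :: "pair \<Rightarrow> real" where
  "pairnorm p = sqrt ((l2norm (fst p))\<^sup>2 + (l2norm (snd p))\<^sup>2)"

definition lam :: "(vertex \<Rightarrow> vertex) \<Rightarrow> pair \<Rightarrow> pair" where
  "lam g p = ((\<lambda>t. u g (fst p) t + D g (snd p) t), u g (snd p))"

definition bounded_op_into_pair :: "((vertex \<Rightarrow> complex) \<Rightarrow> pair) \<Rightarrow> bool" where
  "bounded_op_into_pair S \<longleftrightarrow>
     (\<forall>y\<in>ell2. S y \<in> l2pair) \<and>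
     (\<forall>x\<in>ell2. \<forall>y\<in>ell2. S (\<lambda>t. x t + y t) =
          ((\<lambda>t. fst (S x) t + fst (S y) t), (\<lambda>t. snd (S x) t + snd (S y) t))) \<and>
     (\<forall>x\<in>ell2. \<forall>c::complex. S (\<lambda>t. c * x t) =
          ((\<lambda>t. c * fst (S x) t), (\<lambda>t. c * snd (S x) t))) \<and>
     (\<exists>K. \<forall>y\<in>ell2. pairnorm (S y) \<le> K * l2norm y)"

definition right_inverse_of_quotient :: "((vertex \<Rightarrow> complex) \<Rightarrow> pair) \<Rightarrow> bool" where
  "right_inverse_of_quotient S \<longleftrightarrow> (\<forall>y\<in>ell2. snd (S y) = y)"

end

theory Submission
  imports Defs
begin

text \<open>Suppose \<open>S\<close> is a bounded \<open>G\<close>-equivariant right inverse of the quotient map and let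
  \<open>y\<close> be the first component of \<open>S e\<^sub>\<emptyset>\<close>.  For the left translation \<open>g\<close> by a generator
  \<open>a\<close> the commutator \<open>u(g)L - Lu(g)\<close> is an explicit rank-two operator, and equivariance
  under \<open>g\<close> shows that the first component of \<open>S e\<^sub>a\<close> takes the value \<open>y(a\<^sup>-\<^sup>1) - 1\<close> at
  the root.  Summing over \<open>n\<close> distinct generators, a vector of norm \<open>\<surd>n\<close> is sent to a vector
  whose root entry \<open>\<Sum> (y(a\<^sup>-\<^sup>1) - 1)\<close> has modulus of order \<open>n\<close>, because \<open>y\<close> is square
  summable; this contradicts boundedness.  As Banach spaces the sequence splits via
  \<open>y \<mapsto> (0, y)\<close>.\<close>

section \<open>Reduced words and left translations\<close>

lemma inv_letter_inv_letter [simp]: "inv_letter (inv_letter l) = l"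
  by (simp add: inv_letter_def)

lemma reduced_Nil [simp]: "reduced []"
  by (simp add: reduced_def)

lemma reduced_Cons: "reduced (m # w) \<longleftrightarrow> reduced w \<and> (w \<noteq> [] \<longrightarrow> hd w \<noteq> inv_letter m)"
  unfolding reduced_def
  by (cases w) (auto simp: nth_Cons split: nat.splits)

lemma reduced_two [simp]: "reduced [m, m'] \<longleftrightarrow> m' \<noteq> inv_letter m"
  by (simp add: reduced_Cons)

lemma reduced_snoc: "reduced (w @ [m]) \<longleftrightarrow> reduced w \<and> (w \<noteq> [] \<longrightarrow> m \<noteq> inv_letter (last w))"
  by (induction w rule: induct_list012) (auto simp: reduced_Cons)

lemma reduced_butlast: "reduced w \<Longrightarrow> reduced (butlast w)"
  by (metis append_butlast_last_id butlast.simps(1) reduced_snoc)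

definition lmult_word :: "letter \<Rightarrow> letter list \<Rightarrow> letter list" where
  "lmult_word l w = (case w of [] \<Rightarrow> [l] | m # w' \<Rightarrow> if m = inv_letter l then w' else l # w)"

lemma lmult_word_Nil [simp]: "lmult_word l [] = [l]"
  by (simp add: lmult_word_def)

lemma lmult_word_Cons [simp]:
  "lmult_word l (m # w) = (if m = inv_letter l then w else l # m # w)"
  by (simp add: lmult_word_def)

lemma reduced_lmult_word: "reduced w \<Longrightarrow> reduced (lmult_word l w)"
  by (cases w) (auto simp: reduced_Cons)

lemma lmult_word_inv_letter: "reduced w \<Longrightarrow> lmult_word (inv_letter l) (lmult_word l w) = w"
  by (cases w rule: remdups_adj.cases) (auto simp: reduced_Cons)

lemma lmult_word_snoc: "w \<noteq> [] \<Longrightarrow> lmult_word l (w @ [m]) = lmult_word l w @ [m]"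
  by (cases w) auto

definition lmult :: "letter \<Rightarrow> vertex \<Rightarrow> vertex" where
  "lmult l v = Abs_vertex (lmult_word l (word v))"

definition gen :: "letter \<Rightarrow> vertex" where
  "gen l = Abs_vertex [l]"

definition children :: "vertex \<Rightarrow> vertex set" where
  "children s = {t. t \<noteq> root \<and> parent t = s}"

lemma reduced_word [simp]: "reduced (word v)"
  using word by auto

lemma vertex_eq_iff: "s = t \<longleftrightarrow> word s = word t"
  by (simp add: word_inject)

lemma word_root [simp]: "word root = []"
  by (simp add: root_def Abs_vertex_inverse)

lemma word_gen [simp]: "word (gen l) = [l]"
  by (simp add: gen_def Abs_vertex_inverse reduced_Cons)

lemma word_lmult [simp]: "word (lmult l v) = lmult_word l (word v)"
  by (simp add: lmult_def Abs_vertex_inverse reduced_lmult_word)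

lemma word_parent [simp]: "word (parent t) = butlast (word t)"
  by (simp add: parent_def Abs_vertex_inverse reduced_butlast)

lemma root_neq_gen [simp]: "root \<noteq> gen l" "gen l \<noteq> root"
  by (auto simp: vertex_eq_iff)

lemma gen_eq_iff [simp]: "gen l = gen k \<longleftrightarrow> l = k"
  by (auto simp: vertex_eq_iff)

lemma lmult_root: "lmult l root = gen l"
  by (simp add: vertex_eq_iff)

lemma lmult_inv_letter [simp]: "lmult (inv_letter l) (lmult l v) = v"
  by (simp add: vertex_eq_iff lmult_word_inv_letter)

lemma bij_lmult: "bij (lmult l)"
  by (rule o_bij[where g = "lmult (inv_letter l)"]) (auto simp: fun_eq_iff, metis inv_letter_inv_letter lmult_inv_letter)

lemma inv_lmult: "inv (lmult l) = lmult (inv_letter l)"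
  by (rule inv_unique_comp) (auto simp: fun_eq_iff, metis inv_letter_inv_letter lmult_inv_letter)

lemma root_notin_children [simp]: "root \<notin> children s"
  by (simp add: children_def)

lemma children_iff: "t \<in> children s \<longleftrightarrow> (\<exists>m. word t = word s @ [m])"
proof
  assume "t \<in> children s"
  then have "word t \<noteq> []" "butlast (word t) = word s"
    by (auto simp: children_def vertex_eq_iff)
  then show "\<exists>m. word t = word s @ [m]"
    by (metis append_butlast_last_id)
qed (auto simp: children_def vertex_eq_iff)

lemma adj_iff_children: "adj s t \<longleftrightarrow> t \<in> children s \<or> s \<in> children t"
  by (auto simp: adj_def children_def)

lemma lmult_children: "s \<noteq> root \<Longrightarrow> t \<in> children s \<Longrightarrow> lmult l t \<in> children (lmult l s)"
  unfolding children_iff by (auto simp: vertex_eq_iff lmult_word_snoc)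

lemma adj_lmult: "adj s t \<Longrightarrow> adj (lmult l s) (lmult l t)"
proof -
  have "lmult l t \<in> children (lmult l s) \<or> lmult l s \<in> children (lmult l t)"
    if "t \<in> children s" for s t
  proof (cases "s = root")
    case True
    with that obtain m where "word t = [m]" by (auto simp: children_iff)
    with True show ?thesis by (cases "m = inv_letter l") (auto simp: children_iff)
  qed (use lmult_children that in blast)
  then show "adj s t \<Longrightarrow> adj (lmult l s) (lmult l t)"
    unfolding adj_iff_children by blast
qed

lemma lmult_in_Aut: "lmult l \<in> Aut"
proof -
  have "adj (lmult l s) (lmult l t) \<Longrightarrow> adj s t" for s t
    using adj_lmult[of "lmult l s" "lmult l t" "inv_letter l"] by simp
  then show ?thesis
    unfolding Aut_def using bij_lmult adj_lmult by blast
qed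

lemma lmult_image_children:
  assumes "s \<noteq> root" "s \<noteq> gen l"
  shows "lmult (inv_letter l) ` children s = children (lmult (inv_letter l) s)"
proof
  show "lmult (inv_letter l) ` children s \<subseteq> children (lmult (inv_letter l) s)"
    using lmult_children[OF assms(1)] by blast
  have "lmult (inv_letter l) s \<noteq> root"
  proof
    assume "lmult (inv_letter l) s = root"
    then have "s = lmult l root"
      by (metis inv_letter_inv_letter lmult_inv_letter)
    with assms(2) show False
      by (simp add: vertex_eq_iff)
  qed
  then have "lmult l t \<in> children s" if "t \<in> children (lmult (inv_letter l) s)" for t
    using lmult_children[OF _ that, of l] by (metis inv_letter_inv_letter lmult_inv_letter)
  then show "children (lmult (inv_letter l) s) \<subseteq> lmult (inv_letter l) ` children s"
    by (metis image_eqI lmult_inv_letter subsetI)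
qed

lemma lmult_image_children_root:
  "lmult (inv_letter l) ` children root = insert root (children (gen (inv_letter l)))"
proof
  show "lmult (inv_letter l) ` children root \<subseteq> insert root (children (gen (inv_letter l)))"
  proof
    fix t assume "t \<in> lmult (inv_letter l) ` children root"
    then obtain t' m where "t = lmult (inv_letter l) t'" "word t' = [m]"
      by (auto simp: children_iff)
    then show "t \<in> insert root (children (gen (inv_letter l)))"
      by (cases "m = l") (auto simp: vertex_eq_iff children_iff)
  qed
  show "insert root (children (gen (inv_letter l))) \<subseteq> lmult (inv_letter l) ` children root"
  proof
    fix t assume t: "t \<in> insert root (children (gen (inv_letter l)))"
    show "t \<in> lmult (inv_letter l) ` children root"
    proof (cases "t = root")
      case True
      have "root = lmult (inv_letter l) (gen l)"
        by (simp add: vertex_eq_iff)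
      with True show ?thesis
        by (auto simp: children_iff)
    next
      case False
      with t obtain m where m: "word t = [inv_letter l, m]"
        by (auto simp: children_iff)
      with reduced_word[of t] have "t = lmult (inv_letter l) (gen m)"
        by (auto simp: vertex_eq_iff)
      then show ?thesis
        by (auto simp: children_iff)
    qed
  qed
qed

lemma lmult_image_children_gen:
  "lmult (inv_letter l) ` children (gen l) = children root - {gen (inv_letter l)}"
proof
  show "lmult (inv_letter l) ` children (gen l) \<subseteq> children root - {gen (inv_letter l)}"
  proof
    fix t assume "t \<in> lmult (inv_letter l) ` children (gen l)"
    then obtain t' m where "t = lmult (inv_letter l) t'" "word t' = [l, m]"
      by (auto simp: children_iff)
    with reduced_word[of t'] show "t \<in> children root - {gen (inv_letter l)}"
      by (auto simp: vertex_eq_iff children_iff)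
  qed
  show "children root - {gen (inv_letter l)} \<subseteq> lmult (inv_letter l) ` children (gen l)"
  proof
    fix t assume t: "t \<in> children root - {gen (inv_letter l)}"
    then obtain m where m: "word t = [m]" "m \<noteq> inv_letter l"
      by (auto simp: children_iff vertex_eq_iff)
    then have "Abs_vertex [l, m] \<in> children (gen l)"
      by (simp add: children_iff Abs_vertex_inverse)
    moreover have "t = lmult (inv_letter l) (Abs_vertex [l, m])"
      using m by (simp add: vertex_eq_iff Abs_vertex_inverse)
    ultimately show "t \<in> lmult (inv_letter l) ` children (gen l)"
      by blast
  qed
qed

section \<open>Square-summable functions\<close>

lemma finite_support_in_ell1:
  assumes "finite F" "\<And>t. t \<notin> F \<Longrightarrow> x t = 0"
  shows "x \<in> ell1"
  unfolding ell1_def mem_Collect_eq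
  by (rule finite_nonzero_values_imp_summable_on, rule finite_subset[OF _ assms(1)])
    (use assms(2) in auto)

lemma finite_support_in_ell2:
  assumes "finite F" "\<And>t. t \<notin> F \<Longrightarrow> x t = 0"
  shows "x \<in> ell2"
  unfolding ell2_def mem_Collect_eq
  by (rule finite_nonzero_values_imp_summable_on, rule finite_subset[OF _ assms(1)])
    (use assms(2) in auto)

lemma l2norm_nonneg: "l2norm x \<ge> 0"
  unfolding l2norm_def by (simp add: infsum_nonneg)

lemma l2norm_squared: "(l2norm x)\<^sup>2 = (\<Sum>\<^sub>\<infinity>t. (cmod (x t))\<^sup>2)"
  unfolding l2norm_def by (simp add: infsum_nonneg)

lemma l2norm_finite_support:
  assumes "finite F" "\<And>t. t \<notin> F \<Longrightarrow> x t = 0"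
  shows "l2norm x = sqrt (\<Sum>t\<in>F. (cmod (x t))\<^sup>2)"
proof -
  have "(\<Sum>\<^sub>\<infinity>t. (cmod (x t))\<^sup>2) = (\<Sum>\<^sub>\<infinity>t\<in>F. (cmod (x t))\<^sup>2)"
    by (rule infsum_cong_neutral) (use assms in auto)
  then show ?thesis
    using assms(1) by (simp add: l2norm_def)
qed

lemma sum_le_l2norm_squared:
  assumes "x \<in> ell2" "finite F"
  shows "(\<Sum>t\<in>F. (cmod (x t))\<^sup>2) \<le> (l2norm x)\<^sup>2"
  unfolding l2norm_squared
  by (rule finite_sum_le_infsum) (use assms in \<open>auto simp: ell2_def\<close>)

lemma norm_le_l2norm:
  assumes "x \<in> ell2"
  shows "cmod (x s) \<le> l2norm x"
  using sum_le_l2norm_squared[OF assms, of "{s}"] l2norm_nonneg[of x]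
  by (simp add: power_mono_iff)

lemma ell2_dominated:
  assumes "x \<in> ell2" "\<And>t. cmod (y t) \<le> cmod (x t)"
  shows "y \<in> ell2"
proof -
  have "(\<lambda>t. (cmod (x t))\<^sup>2) summable_on UNIV"
    using assms(1) by (simp add: ell2_def)
  then have "(\<lambda>t. (cmod (y t))\<^sup>2) summable_on UNIV"
    by (rule summable_on_comparison_test) (auto simp: assms(2) power_mono)
  then show ?thesis
    by (simp add: ell2_def)
qed

lemma ell2_add:
  assumes "x \<in> ell2" "y \<in> ell2"
  shows "(\<lambda>t. x t + y t) \<in> ell2"
proof -
  have "(\<lambda>t. 2 * (cmod (x t))\<^sup>2 + 2 * (cmod (y t))\<^sup>2) summable_on UNIV"
    using assms by (auto simp: ell2_def intro!: summable_on_add summable_on_cmult_right)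
  moreover have "(cmod (x t + y t))\<^sup>2 \<le> 2 * (cmod (x t))\<^sup>2 + 2 * (cmod (y t))\<^sup>2" for t
  proof -
    have "(cmod (x t + y t))\<^sup>2 \<le> (cmod (x t) + cmod (y t))\<^sup>2"
      by (simp add: power_mono norm_triangle_ineq)
    also have "\<dots> \<le> 2 * (cmod (x t))\<^sup>2 + 2 * (cmod (y t))\<^sup>2"
      by (smt (verit) sum_squares_bound power2_sum)
    finally show ?thesis .
  qed
  ultimately have "(\<lambda>t. (cmod (x t + y t))\<^sup>2) summable_on UNIV"
    by (rule summable_on_comparison_test) simp
  then show ?thesis
    by (simp add: ell2_def)
qed

lemma ell2_scale:
  assumes "x \<in> ell2"
  shows "(\<lambda>t. c * x t) \<in> ell2"
proof -
  have "(\<lambda>t. (cmod c)\<^sup>2 * (cmod (x t))\<^sup>2) summable_on UNIV"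
    using assms by (auto simp: ell2_def intro!: summable_on_cmult_right)
  then show ?thesis
    by (simp add: ell2_def norm_mult power_mult_distrib)
qed

lemma ell1_summable_on:
  assumes "x \<in> ell1"
  shows "x summable_on A"
proof -
  have "x summable_on UNIV"
    using assms by (simp add: ell1_def abs_summable_summable)
  then show ?thesis
    by (rule summable_on_subset_banach) simp
qed

lemma ell1_subset_ell2: "ell1 \<subseteq> ell2"
proof
  fix x assume "x \<in> ell1"
  then have s: "(\<lambda>t. cmod (x t)) summable_on UNIV"
    by (simp add: ell1_def)
  define M where "M = (\<Sum>\<^sub>\<infinity>t. cmod (x t))"
  have "cmod (x t) \<le> M" for t
    using finite_sum_le_infsum[OF s, of "{t}"] by (simp add: M_def)
  then have "(cmod (x t))\<^sup>2 \<le> M * cmod (x t)" for t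
    by (simp add: power2_eq_square mult_right_mono)
  with summable_on_cmult_right[OF s, of M]
  have "(\<lambda>t. (cmod (x t))\<^sup>2) summable_on UNIV"
    by (rule summable_on_comparison_test) simp
  then show "x \<in> ell2"
    by (simp add: ell2_def)
qed

lemma ell2_tail_small:
  assumes "x \<in> ell2" "\<delta> > 0"
  obtains F where "finite F" "(\<lambda>t. if t \<in> F then 0 else x t) \<in> ell2"
    "l2norm (\<lambda>t. if t \<in> F then 0 else x t) \<le> \<delta>"
proof -
  let ?f = "\<lambda>t. (cmod (x t))\<^sup>2"
  have f: "?f summable_on UNIV"
    using assms(1) by (simp add: ell2_def)
  obtain F where F: "finite F" "dist (sum ?f F) (infsum ?f UNIV) \<le> \<delta>\<^sup>2"
    using infsum_finite_approximation[OF f, of "\<delta>\<^sup>2"] assms(2) by auto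
  define tail where "tail = (\<lambda>t. if t \<in> F then 0 else x t)"
  have "(l2norm tail)\<^sup>2 = infsum ?f (UNIV - F)"
    unfolding l2norm_squared by (rule infsum_cong_neutral) (auto simp: tail_def)
  also have "\<dots> = infsum ?f UNIV - sum ?f F"
    using infsum_Diff[OF f summable_on_subset[OF f]] F(1) by simp
  also have "\<dots> \<le> \<delta>\<^sup>2"
    using F(2) by (simp add: dist_real_def)
  finally have "l2norm tail \<le> \<delta>"
    by (rule power2_le_imp_le) (use assms(2) in simp)
  moreover have "tail \<in> ell2"
    by (rule ell2_dominated[OF assms(1)]) (simp add: tail_def)
  ultimately show thesis
    using that F(1) unfolding tail_def by blast
qed

lemma bounded_op_l2_pointwise_bound:
  assumes "bounded_op_l2 A"
  obtains K where "K \<ge> 0" "\<And>x s. x \<in> ell2 \<Longrightarrow> cmod (A x s) \<le> K * l2norm x"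
proof -
  obtain K where K: "\<And>x. x \<in> ell2 \<Longrightarrow> l2norm (A x) \<le> K * l2norm x"
    using assms unfolding bounded_op_l2_def by blast
  have "cmod (A x s) \<le> \<bar>K\<bar> * l2norm x" if "x \<in> ell2" for x s
  proof -
    have "cmod (A x s) \<le> l2norm (A x)"
      using assms that by (simp add: bounded_op_l2_def norm_le_l2norm)
    also have "\<dots> \<le> K * l2norm x"
      using K[OF that] .
    also have "\<dots> \<le> \<bar>K\<bar> * l2norm x"
      by (rule mult_right_mono) (auto simp: l2norm_nonneg)
    finally show ?thesis .
  qed
  then show thesis
    using that[of "\<bar>K\<bar>"] by simp
qed

lemma bounded_op_l2_unique:
  assumes "bounded_op_l2 A" "bounded_op_l2 B"
    and "\<And>x. x \<notin> ell2 \<Longrightarrow> A x = (\<lambda>t. 0)" "\<And>x. x \<notin> ell2 \<Longrightarrow> B x = (\<lambda>t. 0)"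
    and "\<And>x. x \<in> ell1 \<Longrightarrow> A x = B x"
  shows "A = B"
proof (intro ext)
  fix x s
  show "A x s = B x s"
  proof (cases "x \<in> ell2")
    case x: True
    obtain KA where KA: "KA \<ge> 0" "\<And>x s. x \<in> ell2 \<Longrightarrow> cmod (A x s) \<le> KA * l2norm x"
      using bounded_op_l2_pointwise_bound[OF assms(1)] by blast
    obtain KB where KB: "KB \<ge> 0" "\<And>x s. x \<in> ell2 \<Longrightarrow> cmod (B x s) \<le> KB * l2norm x"
      using bounded_op_l2_pointwise_bound[OF assms(2)] by blast
    have "cmod (A x s - B x s) \<le> \<epsilon>" if "\<epsilon> > 0" for \<epsilon>
    proof -
      obtain F where F: "finite F" and tail: "(\<lambda>t. if t \<in> F then 0 else x t) \<in> ell2"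
        and small: "l2norm (\<lambda>t. if t \<in> F then 0 else x t) \<le> \<epsilon> / (KA + KB + 1)"
        using ell2_tail_small[OF x, of "\<epsilon> / (KA + KB + 1)"] \<open>\<epsilon> > 0\<close> KA(1) KB(1) by auto
      define xF where "xF = (\<lambda>t. if t \<in> F then x t else 0)"
      define xR where "xR = (\<lambda>t. if t \<in> F then 0 else x t)"
      have xF: "xF \<in> ell1"
        by (rule finite_support_in_ell1[OF F]) (simp add: xF_def)
      have xR: "xR \<in> ell2"
        using tail by (simp add: xR_def)
      have "x = (\<lambda>t. xF t + xR t)"
        by (auto simp: xF_def xR_def)
      then have "A x s - B x s = A xR s - B xR s"
        using assms(1,2) xF ell1_subset_ell2 xR assms(5)[OF xF]
        by (simp add: bounded_op_l2_def subset_iff)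
      also have "cmod \<dots> \<le> cmod (A xR s) + cmod (B xR s)"
        by (rule norm_triangle_ineq4)
      also have "\<dots> \<le> KA * l2norm xR + KB * l2norm xR"
        using KA(2)[OF xR] KB(2)[OF xR] by (rule add_mono)
      also have "\<dots> \<le> (KA + KB + 1) * (\<epsilon> / (KA + KB + 1))"
        using mult_left_mono[OF small, of "KA + KB + 1"] l2norm_nonneg[of xR] KA(1) KB(1)
        unfolding xR_def by (simp add: distrib_right)
      also have "\<dots> = \<epsilon>"
        using KA(1) KB(1) by simp
      finally show ?thesis .
    qed
    then show ?thesis
      using field_le_epsilon[of "cmod (A x s - B x s)" 0] by simp
  qed (simp add: assms(3,4))
qed

lemma sum_norm_le_half_l2norm:
  assumes "y \<in> ell2" "inj b"
  shows "(\<Sum>i<n. cmod (y (b i))) \<le> (real n + (l2norm y)\<^sup>2) / 2"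
proof -
  have "cmod z \<le> (1 + (cmod z)\<^sup>2) / 2" for z
    using sum_squares_bound[of "cmod z" 1] by (simp add: power2_eq_square)
  then have "(\<Sum>i<n. cmod (y (b i))) \<le> (\<Sum>i<n. (1 + (cmod (y (b i)))\<^sup>2) / 2)"
    by (intro sum_mono)
  also have "\<dots> = (real n + (\<Sum>t\<in>b ` {..<n}. (cmod (y t))\<^sup>2)) / 2"
    using assms(2) by (simp add: sum_divide_distrib[symmetric] sum.distrib sum.reindex inj_on_subset)
  also have "\<dots> \<le> (real n + (l2norm y)\<^sup>2) / 2"
    using sum_le_l2norm_squared[OF assms(1)] by simp
  finally show ?thesis .
qed

lemma linear_exceeds_sqrt: "\<exists>n::nat. K * sqrt (real n) < real n / 2 - c"
proof
  define N where "N = nat \<lceil>2 * \<bar>K\<bar> + 2 * \<bar>c\<bar> + 2\<rceil>"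
  have N: "real N \<ge> 2 * \<bar>K\<bar> + 2 * \<bar>c\<bar> + 2"
    unfolding N_def by linarith
  have "c < 1 * (\<bar>c\<bar> + 1)"
    by simp
  also have "\<dots> \<le> real N * (\<bar>c\<bar> + 1)"
    by (rule mult_right_mono) (use N in auto)
  also have "\<dots> \<le> real N * (real N / 2 - K)"
    by (rule mult_left_mono) (use N in auto)
  also have "\<dots> = real (N\<^sup>2) / 2 - K * sqrt (real (N\<^sup>2))"
    by (simp add: power2_eq_square algebra_simps)
  finally show "K * sqrt (real (N\<^sup>2)) < real (N\<^sup>2) / 2 - c"
    by linarith
qed

text \<open>The values \<open>y (b i) - 1\<close> tend to \<open>-1\<close> in mean, so their partial sums grow linearly,
  faster than the \<open>\<surd>n\<close> allowed by a bounded operator.\<close>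
lemma ell2_shifted_sums_exceed_sqrt:
  assumes "y \<in> ell2" "inj b"
  shows "\<exists>n. K * sqrt (real n) < cmod (\<Sum>i<n. y (b i) - 1)"
proof -
  obtain n where n: "K * sqrt (real n) < real n / 2 - (l2norm y)\<^sup>2 / 2"
    using linear_exceeds_sqrt by blast
  have "real n - (\<Sum>i<n. cmod (y (b i))) \<le> cmod (of_nat n - (\<Sum>i<n. y (b i)))"
    using norm_triangle_ineq2[of "of_nat n :: complex" "\<Sum>i<n. y (b i)"] norm_sum[of y "b ` {..<n}"]
      norm_sum[of "\<lambda>i. y (b i)" "{..<n}"] by simp
  also have "\<dots> = cmod (\<Sum>i<n. y (b i) - 1)"
    by (simp add: sum_subtractf norm_minus_commute)
  finally show ?thesis
    using n sum_norm_le_half_l2norm[OF assms, of n] by (intro exI[of _ n]) argo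
qed

section \<open>The commutator of a left translation with \<open>L\<close>\<close>

text \<open>Left translation by \<open>l\<^sup>-\<^sup>1\<close> carries the children of \<open>s\<close> onto the children of its
  image, except for \<open>s = root\<close> (one vertex gained) and \<open>s = l\<close> (one vertex lost); so
  \<open>u(g)L - Lu(g)\<close> for \<open>g = lmult l\<close> is the following rank-two operator.\<close>
definition lmult_commutator :: "letter \<Rightarrow> (vertex \<Rightarrow> complex) \<Rightarrow> (vertex \<Rightarrow> complex)" where
  "lmult_commutator l x =
     (if x \<in> ell2
      then (\<lambda>s. if s = root then - x root else if s = gen l then x (gen (inv_letter l)) else 0)
      else (\<lambda>t. 0))"

lemma bounded_op_l2_lmult_commutator: "bounded_op_l2 (lmult_commutator l)"
  unfolding bounded_op_l2_def
proof (intro conjI ballI allI)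
  fix x assume x: "x \<in> ell2"
  show "lmult_commutator l x \<in> ell2"
    by (rule finite_support_in_ell2[of "{root, gen l}"]) (auto simp: lmult_commutator_def x)
  fix y assume y: "y \<in> ell2"
  show "lmult_commutator l (\<lambda>t. x t + y t) = (\<lambda>t. lmult_commutator l x t + lmult_commutator l y t)"
    using ell2_add[OF x y] x y by (auto simp: lmult_commutator_def)
next
  fix x c assume x: "x \<in> ell2"
  show "lmult_commutator l (\<lambda>t. c * x t) = (\<lambda>t. c * lmult_commutator l x t)"
    using ell2_scale[OF x, of c] x by (auto simp: lmult_commutator_def)
next
  show "\<exists>K. \<forall>x\<in>ell2. l2norm (lmult_commutator l x) \<le> K * l2norm x"
  proof (intro exI[of _ 1] ballI)
    fix x assume x: "x \<in> ell2"
    have "l2norm (lmult_commutator l x) = sqrt (\<Sum>t\<in>{root, gen l}. (cmod (lmult_commutator l x t))\<^sup>2)"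
      by (rule l2norm_finite_support) (auto simp: lmult_commutator_def x)
    also have "\<dots> = sqrt (\<Sum>t\<in>{root, gen (inv_letter l)}. (cmod (x t))\<^sup>2)"
      by (simp add: lmult_commutator_def x)
    also have "\<dots> \<le> sqrt ((l2norm x)\<^sup>2)"
      by (rule real_sqrt_le_mono, rule sum_le_l2norm_squared[OF x]) simp
    finally show "l2norm (lmult_commutator l x) \<le> 1 * l2norm x"
      by (simp add: l2norm_nonneg)
  qed
qed

lemma L_eq_infsum_children: "L x s = infsum x (children s)"
  by (simp add: L_def children_def)

lemma lmult_commutator_eq:
  assumes x: "x \<in> ell1"
  shows "lmult_commutator l x = (\<lambda>s. u (lmult l) (L x) s - L (u (lmult l) x) s)"
proof
  fix s
  let ?h = "lmult (inv_letter l)"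
  have "L (u (lmult l) x) s = infsum (x \<circ> ?h) (children s)"
    by (simp add: L_eq_infsum_children u_def inv_lmult o_def)
  also have "\<dots> = infsum x (?h ` children s)"
    using bij_lmult[of "inv_letter l"]
    by (metis bij_is_inj inj_on_subset subset_UNIV infsum_reindex)
  finally have R: "L (u (lmult l) x) s = infsum x (?h ` children s)" .
  have Lu: "u (lmult l) (L x) s = infsum x (children (?h s))"
    by (simp add: L_eq_infsum_children u_def inv_lmult)
  have summable: "x summable_on A" for A
    by (rule ell1_summable_on[OF x])
  have x2: "x \<in> ell2"
    using x ell1_subset_ell2 by blast
  consider "s = root" | "s = gen l" | "s \<noteq> root" "s \<noteq> gen l"
    by blast
  then show "lmult_commutator l x s = u (lmult l) (L x) s - L (u (lmult l) x) s"
  proof cases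
    case 1
    have "?h root = gen (inv_letter l)"
      by (simp add: vertex_eq_iff)
    then show ?thesis
      unfolding R Lu unfolding 1 lmult_image_children_root
      by (simp add: infsum_insert[OF summable] lmult_commutator_def x2)
  next
    case 2
    have "?h (gen l) = root"
      by (simp add: vertex_eq_iff)
    moreover have "gen (inv_letter l) \<in> children root"
      by (simp add: children_iff)
    then have "infsum x (children root)
      = x (gen (inv_letter l)) + infsum x (children root - {gen (inv_letter l)})"
      by (metis infsum_insert[OF summable] insert_Diff Diff_iff singletonI)
    ultimately show ?thesis
      unfolding R Lu unfolding 2 lmult_image_children_gen
      by (simp add: lmult_commutator_def x2)
  next
    case 3
    then show ?thesis
      unfolding R Lu lmult_image_children[OF 3] by (simp add: lmult_commutator_def x2)
  qed
qed

lemma D_lmult: "D (lmult l) = lmult_commutator l"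
  unfolding D_def
proof (rule the_equality)
  show "bounded_op_l2 (lmult_commutator l) \<and> (\<forall>x. x \<notin> ell2 \<longrightarrow> lmult_commutator l x = (\<lambda>t. 0)) \<and>
    (\<forall>x\<in>ell1. lmult_commutator l x = (\<lambda>s. u (lmult l) (L x) s - L (u (lmult l) x) s))"
    using bounded_op_l2_lmult_commutator lmult_commutator_eq by (auto simp: lmult_commutator_def)
  then show "\<And>A. bounded_op_l2 A \<and> (\<forall>x. x \<notin> ell2 \<longrightarrow> A x = (\<lambda>t. 0)) \<and>
      (\<forall>x\<in>ell1. A x = (\<lambda>s. u (lmult l) (L x) s - L (u (lmult l) x) s)) \<Longrightarrow>
    A = lmult_commutator l"
    by (intro bounded_op_l2_unique) auto
qed

section \<open>Equivariant splittings\<close>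

lemma u_indicator:
  assumes "bij g"
  shows "u g (indicator A) = indicator (g ` A)"
proof -
  have "inv g t \<in> A \<longleftrightarrow> t \<in> g ` A" for t
    using assms by (metis bij_inv_eq_iff image_iff)
  then show ?thesis
    by (simp add: u_def fun_eq_iff indicator_def)
qed

lemma indicator_finite_in_ell2: "finite F \<Longrightarrow> (indicator F :: vertex \<Rightarrow> complex) \<in> ell2"
  by (rule finite_support_in_ell2) auto

lemma l2norm_indicator: "finite F \<Longrightarrow> l2norm (indicator F :: vertex \<Rightarrow> complex) = sqrt (card F)"
  by (subst l2norm_finite_support[of F]) auto

lemma zero_in_ell2: "(\<lambda>t. 0) \<in> ell2"
  by (rule finite_support_in_ell2[of "{}"]) auto

lemma split_as_Banach_spaces: "\<exists>S. bounded_op_into_pair S \<and> right_inverse_of_quotient S"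
proof (intro exI conjI)
  let ?S = "\<lambda>y. ((\<lambda>t. 0), y)"
  show "bounded_op_into_pair ?S"
    unfolding bounded_op_into_pair_def
    by (auto simp: l2pair_def zero_in_ell2 pairnorm_def l2norm_def infsum_nonneg intro!: exI[of _ 1])
  show "right_inverse_of_quotient ?S"
    by (simp add: right_inverse_of_quotient_def)
qed

lemma bounded_op_into_pair_fst_bound:
  assumes "bounded_op_into_pair S"
  obtains K where "\<And>y s. y \<in> ell2 \<Longrightarrow> cmod (fst (S y) s) \<le> K * l2norm y"
proof -
  obtain K where K: "\<And>y. y \<in> ell2 \<Longrightarrow> pairnorm (S y) \<le> K * l2norm y"
    using assms unfolding bounded_op_into_pair_def by blast
  have "cmod (fst (S y) s) \<le> K * l2norm y" if y: "y \<in> ell2" for y s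
  proof -
    have "fst (S y) \<in> ell2"
      using assms y by (auto simp: bounded_op_into_pair_def l2pair_def mem_Times_iff)
    then have "cmod (fst (S y) s) \<le> l2norm (fst (S y))"
      by (rule norm_le_l2norm)
    also have "\<dots> \<le> pairnorm (S y)"
      unfolding pairnorm_def by (rule real_le_rsqrt) (simp add: l2norm_def infsum_nonneg)
    also have "\<dots> \<le> K * l2norm y"
      using K[OF y] .
    finally show ?thesis .
  qed
  then show thesis
    using that by blast
qed

lemma bounded_op_into_pair_fst_indicator:
  assumes "bounded_op_into_pair S" "finite F"
  shows "fst (S (indicator F)) s = (\<Sum>v\<in>F. fst (S (indicator {v})) s)"
  using assms(2)
proof (induction F rule: finite_induct)
  case empty
  have "\<And>x c. x \<in> ell2 \<Longrightarrow> S (\<lambda>t. c * x t) = ((\<lambda>t. c * fst (S x) t), (\<lambda>t. c * snd (S x) t))"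
    using assms(1) unfolding bounded_op_into_pair_def by blast
  from this[OF zero_in_ell2, of 0] have "S (\<lambda>t. 0) = ((\<lambda>t. 0), (\<lambda>t. 0))"
    by simp
  moreover have "indicator {} = (\<lambda>t. 0::complex)"
    by (simp add: fun_eq_iff)
  ultimately show ?case
    by simp
next
  case (insert v F)
  then have "(indicator (insert v F) :: vertex \<Rightarrow> complex) = (\<lambda>t. indicator {v} t + indicator F t)"
    by (auto simp: indicator_def fun_eq_iff)
  then show ?case
    using assms(1) insert indicator_finite_in_ell2[of "{v}"] indicator_finite_in_ell2[of F]
    by (simp add: bounded_op_into_pair_def)
qed

lemma equivariant_split_at_root:
  assumes "right_inverse_of_quotient S"
    and "\<forall>g\<in>Aut. \<forall>y\<in>ell2. S (u g y) = lam g (S y)"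
  shows "fst (S (indicator {gen l})) root = fst (S (indicator {root})) (gen (inv_letter l)) - 1"
proof -
  let ?e = "indicator {root} :: vertex \<Rightarrow> complex"
  have e: "?e \<in> ell2"
    by (rule indicator_finite_in_ell2) simp
  have "u (lmult l) ?e = indicator {gen l}"
    by (simp add: u_indicator bij_lmult lmult_root)
  then have "S (indicator {gen l}) = lam (lmult l) (S ?e)"
    using assms(2) lmult_in_Aut e by metis
  moreover have "snd (S ?e) = ?e"
    using assms(1) e by (simp add: right_inverse_of_quotient_def)
  ultimately have "fst (S (indicator {gen l})) root
      = u (lmult l) (fst (S ?e)) root + lmult_commutator l ?e root"
    by (simp add: lam_def D_lmult)
  also have "u (lmult l) (fst (S ?e)) root = fst (S ?e) (gen (inv_letter l))"
    by (simp add: u_def inv_lmult lmult_root)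
  also have "lmult_commutator l ?e root = -1"
    using e by (simp add: lmult_commutator_def)
  finally show ?thesis
    by simp
qed

lemma equivariant_split_sum_at_root:
  assumes "bounded_op_into_pair S" "right_inverse_of_quotient S"
    and "\<forall>g\<in>Aut. \<forall>y\<in>ell2. S (u g y) = lam g (S y)"
  shows "fst (S (indicator ((\<lambda>i. gen (i, True)) ` {..<n}))) root
    = (\<Sum>i<n. fst (S (indicator {root})) (gen (i, False)) - 1)"
proof -
  have inj: "inj_on (\<lambda>i. gen (i, True)) {..<n}"
    by (simp add: inj_on_def)
  have "fst (S (indicator ((\<lambda>i. gen (i, True)) ` {..<n}))) root
      = (\<Sum>v\<in>(\<lambda>i. gen (i, True)) ` {..<n}. fst (S (indicator {v})) root)"
    by (rule bounded_op_into_pair_fst_indicator[OF assms(1)]) simp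
  also have "\<dots> = (\<Sum>i<n. fst (S (indicator {gen (i, True)})) root)"
    by (simp add: sum.reindex[OF inj])
  finally show ?thesis
    using equivariant_split_at_root[OF assms(2,3)] by (simp add: inv_letter_def)
qed

theorem mainTheorem17:
  shows "(\<exists>S. bounded_op_into_pair S \<and> right_inverse_of_quotient S) \<and>
         \<not> (\<exists>S. bounded_op_into_pair S \<and> right_inverse_of_quotient S \<and>
               (\<forall>g\<in>Aut. \<forall>y\<in>ell2. S (u g y) = lam g (S y)))"
proof (intro conjI notI split_as_Banach_spaces)
  assume "\<exists>S. bounded_op_into_pair S \<and> right_inverse_of_quotient S \<and>
    (\<forall>g\<in>Aut. \<forall>y\<in>ell2. S (u g y) = lam g (S y))"
  then obtain S where S: "bounded_op_into_pair S" "right_inverse_of_quotient S"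
    "\<forall>g\<in>Aut. \<forall>y\<in>ell2. S (u g y) = lam g (S y)"
    by blast
  obtain K where K: "\<And>y s. y \<in> ell2 \<Longrightarrow> cmod (fst (S y) s) \<le> K * l2norm y"
    using bounded_op_into_pair_fst_bound[OF S(1)] by blast
  define y where "y = fst (S (indicator {root}))"
  have y: "y \<in> ell2"
    using S(1) indicator_finite_in_ell2[of "{root}"]
    by (auto simp: y_def bounded_op_into_pair_def l2pair_def mem_Times_iff)
  have "cmod (\<Sum>i<n. y (gen (i, False)) - 1) \<le> K * sqrt (real n)" for n
    using K[OF indicator_finite_in_ell2, of "(\<lambda>i. gen (i, True)) ` {..<n}" root]
    by (simp add: equivariant_split_sum_at_root[OF S] y_def l2norm_indicator card_image inj_on_def)
  moreover have "inj (\<lambda>i. gen (i, False))"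
    by (simp add: inj_def)
  ultimately show False
    using ell2_shifted_sums_exceed_sqrt[OF y, of _ K] by (meson not_less)
qed

end
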